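(* Fix a target node $t$ whose incoming neighbors are partitioned into a primary set $\mathcal{S}^*$ with $|\mathcal{S}^*|=n^*$ and a secondary set $\mathcal{S}^c$ with $|\mathcal{S}^c|=m$. Let $E_{t,s}\in\mathbb{R}$ be (random) attention scores, write $E_1^*,\dots,E_{n^*}^*$ for the scores of the primary neighbors and $E_1,\dots,E_m$ for those of the secondary neighbors, and consider softmax attention $$\alpha_{t,s}=\frac{\exp(E_{t,s})}{\sum_{u\in\mathcal{S}^*\cup\mathcal{S}^c}\exp(E_{t,u})}.$$ Define the primary attention mass $$A^*(t):=\sum_{s\in\mathcal{S}^*}\alpha_{t,s}=\frac{X_{n^*}}{X_{n^*}+Y_m},\qquad X_{n^*}:=\sum_{i=1}^{n^*}\exp(E_i^* ),\quad Y_m:=\sum_{j=1}^{m}\exp(E_j).$$ Assume that, as $m\to\infty$ (where $n^*=n^*(m)$ is allowed to depend on $m$): (i) $\frac{1}{m}Y_m\to\mu$ almost surely for some $\mu\in(0,\infty)$; (ii) either (a) $\frac{1}{n^*}X_{n^*}\to\mu^*$ almost surely for some $\mu^*\in(0,\infty)$, or (b) $n^*$ is fixed (independent of $m$) and $X_{n^*}<\infty$ almost surely; (iii) in case (a), $\mu^*/\mu=O(1)$ independently of $m$. Then in case (a), $$A^*(t)=\frac{n^*\mu^*}{n^*\mu^*+m\mu}+o_{\mathrm{a.s.}}(1),$$ and in particular, if $m/n^*\to\infty$, then $A^*(t)\to 0$ almost surely and $A^*(t)=O(n^*/m)$. In case (b), $A^*(t)\to 0$ almost surely and $A^*(t)=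O(1/m)$.
   Context: $o_{\mathrm{a.s.}}(1)$ denotes a random quantity tending to $0$ almost surely as $m\to\infty$. All asymptotic statements are as $m\to\infty$. *)

theory Defs
  imports "HOL-Probability.Probability" "HOL-Library.Landau_Symbols"
begin

text \<open>Incoming neighbours of the target node t: primary ones Inl i (i < nstar),
  secondary ones Inr j (j < m).\<close>
definition neighbours :: "nat \<Rightarrow> nat \<Rightarrow> (nat + nat) set" where
  "neighbours nstar m = Inl ` {..<nstar} \<union> Inr ` {..<m}"

definition score :: "(nat \<Rightarrow> real) \<Rightarrow> (nat \<Rightarrow> real) \<Rightarrow> nat + nat \<Rightarrow> real" where
  "score Es E u = (case u of Inl i \<Rightarrow> Es i | Inr j \<Rightarrow> E j)"

definition attn :: "(nat \<Rightarrow> real) \<Rightarrow> (nat \<Rightarrow> real) \<Rightarrow> nat \<Rightarrow> nat \<Rightarrow> nat + nat \<Rightarrow> real" where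
  "attn Es E nstar m s =
     exp (score Es E s) / (\<Sum>u\<in>neighbours nstar m. exp (score Es E u))"

definition primary_mass :: "(nat \<Rightarrow> real) \<Rightarrow> (nat \<Rightarrow> real) \<Rightarrow> nat \<Rightarrow> nat \<Rightarrow> real" where
  "primary_mass Es E nstar m = (\<Sum>s\<in>Inl ` {..<nstar}. attn Es E nstar m s)"

definition Xsum :: "(nat \<Rightarrow> real) \<Rightarrow> nat \<Rightarrow> real" where
  "Xsum Es nstar = (\<Sum>i<nstar. exp (Es i))"

definition Ysum :: "(nat \<Rightarrow> real) \<Rightarrow> nat \<Rightarrow> real" where
  "Ysum E m = (\<Sum>j<m. exp (E j))"

end

theory Submission
  imports Defs
begin

text \<open>The argument is pathwise: the primary mass is the relative share X/(X + Y) of two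
  positive sums, so on the almost sure event where the normalised sums converge it is a purely
  deterministic statement about sequences. Writing X/(X + Y) = 1/(1 + Y/X), its distance to
  n a/(n a + m b) is at most the distance of the ratio ((Y/m) a)/((X/n) b) from 1. For the
  decay statements, X/(X + Y) \<le> X/Y \<le> (2/b) X/m once Y/m > b/2.\<close>

lemma primary_mass_eq: "primary_mass Es E n m = Xsum Es n / (Xsum Es n + Ysum E m)"
proof -
  have "(\<Sum>u\<in>neighbours n m. exp (score Es E u)) = Xsum Es n + Ysum E m"
    unfolding neighbours_def Xsum_def Ysum_def
    by (subst sum.union_disjoint) (auto simp: sum.reindex score_def)
  moreover have "(\<Sum>s\<in>Inl ` {..<n}. exp (score Es E s)) = Xsum Es n"
    unfolding Xsum_def by (auto simp: sum.reindex score_def)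
  ultimately show ?thesis
    unfolding primary_mass_def attn_def by (simp add: sum_divide_distrib[symmetric])
qed

lemma Xsum_nonneg: "0 \<le> Xsum Es n"
  unfolding Xsum_def by (auto intro: sum_nonneg)

lemma Ysum_nonneg: "0 \<le> Ysum E m"
  unfolding Ysum_def by (auto intro: sum_nonneg)

lemma primary_mass_nonneg: "0 \<le> primary_mass Es E n m"
  by (simp add: primary_mass_eq Xsum_nonneg Ysum_nonneg)

lemma Xsum_div_mult_ratio_eq: "Xsum Es n / real n * (real n / real m) = Xsum Es n / real m"
  by (cases "n = 0") (simp_all add: Xsum_def)

lemma abs_inverse_one_plus_diff_le:
  fixes s t :: real
  assumes "0 \<le> s" "0 < t"
  shows "\<bar>1 / (1 + s) - 1 / (1 + t)\<bar> \<le> \<bar>s / t - 1\<bar>"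
proof -
  have "\<bar>1 / (1 + s) - 1 / (1 + t)\<bar> = \<bar>s - t\<bar> / ((1 + s) * (1 + t))"
    using assms by (simp add: field_simps abs_minus_commute)
  also have "\<dots> \<le> \<bar>s - t\<bar> / t"
    using assms by (intro divide_left_mono) (auto simp: algebra_simps add_pos_nonneg)
  also have "\<dots> = \<bar>s / t - 1\<bar>"
    using assms by (simp add: field_simps)
  finally show ?thesis .
qed

lemma relative_share_diff_le:
  fixes x y x' y' :: real
  assumes "0 < x" "0 \<le> y" "0 < x'" "0 < y'"
  shows "\<bar>x / (x + y) - x' / (x' + y')\<bar> \<le> \<bar>(y * x') / (x * y') - 1\<bar>"
proof -
  have "x / (x + y) = 1 / (1 + y / x)" "x' / (x' + y') = 1 / (1 + y' / x')"
    using assms by (simp_all add: field_simps)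
  moreover have "(y / x) / (y' / x') = (y * x') / (x * y')"
    by simp
  ultimately show ?thesis
    using abs_inverse_one_plus_diff_le[of "y / x" "y' / x'"] assms by simp
qed

lemma relative_share_approx:
  fixes X Y :: "nat \<Rightarrow> real" and n :: "nat \<Rightarrow> nat"
  assumes X: "(\<lambda>m. X m / real (n m)) \<longlonglongrightarrow> a" and Y: "(\<lambda>m. Y m / real m) \<longlonglongrightarrow> b"
    and "0 < a" "0 < b"
  shows "(\<lambda>m. X m / (X m + Y m) - real (n m) * a / (real (n m) * a + real m * b)) \<longlonglongrightarrow> 0"
proof (rule Lim_null_comparison)
  let ?ratio = "\<lambda>m. (Y m / real m * a) / (X m / real (n m) * b)"
  have "\<forall>\<^sub>F m in sequentially. 0 < X m / real (n m)"
    using X \<open>0 < a\<close> by (rule order_tendstoD)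
  moreover have "\<forall>\<^sub>F m in sequentially. 0 < Y m / real m"
    using Y \<open>0 < b\<close> by (rule order_tendstoD)
  ultimately show "\<forall>\<^sub>F m in sequentially.
      norm (X m / (X m + Y m) - real (n m) * a / (real (n m) * a + real m * b))
        \<le> \<bar>?ratio m - 1\<bar>"
  proof eventually_elim
    case (elim m)
    then have "0 < real (n m)" "0 < real m" "0 < X m" "0 < Y m"
      by (auto simp: zero_less_divide_iff)
    moreover have "?ratio m = (Y m * (real (n m) * a)) / (X m * (real m * b))"
      using \<open>0 < real (n m)\<close> \<open>0 < real m\<close> by (simp add: field_simps)
    ultimately show ?case
      using relative_share_diff_le[of "X m" "Y m" "real (n m) * a" "real m * b"] assms
      by simp
  qed
  have "?ratio \<longlonglongrightarrow> (b * a) / (a * b)"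
    using assms by (intro tendsto_intros X Y) auto
  then have "?ratio \<longlonglongrightarrow> 1"
    using assms by simp
  then show "(\<lambda>m. \<bar>?ratio m - 1\<bar>) \<longlonglongrightarrow> 0"
    using tendsto_rabs[OF tendsto_diff[OF _ tendsto_const, of ?ratio 1 sequentially 1]] by simp
qed

lemma primary_mass_eventually_le:
  assumes "(\<lambda>m. Ysum E m / real m) \<longlonglongrightarrow> b" "0 < b"
  shows "\<forall>\<^sub>F m in sequentially. primary_mass Es E (n m) m \<le> 2 / b * (Xsum Es (n m) / real m)"
proof -
  have "\<forall>\<^sub>F m in sequentially. b / 2 < Ysum E m / real m"
    using assms by (intro order_tendstoD) auto
  then show ?thesis
  proof eventually_elim
    case (elim m)
    let ?X = "Xsum Es (n m)" and ?Y = "Ysum E m"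
    have "0 < real m"
      using elim assms by (cases "m = 0") auto
    then have "b / 2 * real m < ?Y"
      using elim by (simp add: field_simps)
    moreover have "0 < b / 2 * real m"
      using \<open>0 < real m\<close> assms by simp
    ultimately have "?X / (?X + ?Y) \<le> ?X / (b / 2 * real m)"
      using Xsum_nonneg[of Es "n m"] by (intro divide_left_mono) auto
    also have "\<dots> = 2 / b * (?X / real m)"
      by simp
    finally show ?case
      by (simp add: primary_mass_eq)
  qed
qed

lemma primary_mass_bigo:
  assumes "(\<lambda>m. Ysum E m / real m) \<longlonglongrightarrow> b" "0 < b"
  shows "(\<lambda>m. primary_mass Es E (n m) m) \<in> O(\<lambda>m. Xsum Es (n m) / real m)"
  using primary_mass_eventually_le[OF assms]
  by (intro bigoI[where c = "2 / b"]) (simp add: primary_mass_nonneg Xsum_nonneg)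

lemma primary_mass_tendsto_0:
  assumes "(\<lambda>m. Ysum E m / real m) \<longlonglongrightarrow> b" "0 < b"
    and "(\<lambda>m. Xsum Es (n m) / real m) \<longlonglongrightarrow> 0"
  shows "(\<lambda>m. primary_mass Es E (n m) m) \<longlonglongrightarrow> 0"
proof (rule Lim_null_comparison)
  show "\<forall>\<^sub>F m in sequentially. norm (primary_mass Es E (n m) m) \<le> 2 / b * (Xsum Es (n m) / real m)"
    using primary_mass_eventually_le[OF assms(1,2)] by (simp add: primary_mass_nonneg)
  show "(\<lambda>m. 2 / b * (Xsum Es (n m) / real m)) \<longlonglongrightarrow> 0"
    using tendsto_mult_right_zero[OF assms(3)] .
qed

lemma primary_mass_bigo_primary_ratio:
  assumes Y: "(\<lambda>m. Ysum E m / real m) \<longlonglongrightarrow> b" "0 < b"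
    and X: "(\<lambda>m. Xsum Es (n m) / real (n m)) \<longlonglongrightarrow> a"
  shows "(\<lambda>m. primary_mass Es E (n m) m) \<in> O(\<lambda>m. real (n m) / real m)"
proof -
  have "(\<lambda>m. Xsum Es (n m) / real (n m)) \<in> O(\<lambda>m. 1)"
    using X by (intro bigoI_tendsto[where c = a]) auto
  then have "(\<lambda>m. Xsum Es (n m) / real (n m) * (real (n m) / real m))
      \<in> O(\<lambda>m. 1 * (real (n m) / real m))"
    by (rule landau_o.big.mult_right)
  then have "(\<lambda>m. Xsum Es (n m) / real m) \<in> O(\<lambda>m. real (n m) / real m)"
    by (simp only: Xsum_div_mult_ratio_eq mult_1)
  with primary_mass_bigo[OF Y] show ?thesis
    by (rule landau_o.big_trans)
qed

lemma primary_mass_tendsto_0_primary_ratio: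
  assumes Y: "(\<lambda>m. Ysum E m / real m) \<longlonglongrightarrow> b" "0 < b"
    and X: "(\<lambda>m. Xsum Es (n m) / real (n m)) \<longlonglongrightarrow> a"
    and ratio: "(\<lambda>m. real (n m) / real m) \<longlonglongrightarrow> 0"
  shows "(\<lambda>m. primary_mass Es E (n m) m) \<longlonglongrightarrow> 0"
  using tendsto_mult[OF X ratio]
  by (intro primary_mass_tendsto_0[OF Y]) (simp only: Xsum_div_mult_ratio_eq mult_zero_right)

lemma primary_mass_fixed_bigo:
  assumes "(\<lambda>m. Ysum E m / real m) \<longlonglongrightarrow> b" "0 < b"
  shows "(\<lambda>m. primary_mass Es E N m) \<in> O(\<lambda>m. 1 / real m)"
proof -
  have "(\<lambda>m. Xsum Es N / real m) \<in> O(\<lambda>m. 1 / real m)"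
    by (intro bigoI[where c = "\<bar>Xsum Es N\<bar>"]) (simp add: abs_mult)
  with primary_mass_bigo[OF assms] show ?thesis
    by (rule landau_o.big_trans)
qed

lemma primary_mass_fixed_tendsto_0:
  assumes "(\<lambda>m. Ysum E m / real m) \<longlonglongrightarrow> b" "0 < b"
  shows "(\<lambda>m. primary_mass Es E N m) \<longlonglongrightarrow> 0"
proof (rule primary_mass_tendsto_0[OF assms])
  show "(\<lambda>m. Xsum Es N / real m) \<longlonglongrightarrow> 0"
    using tendsto_mult_right_zero[OF lim_inverse_n', of "Xsum Es N"] by (simp add: divide_inverse)
qed

theorem theoremA1:
  fixes M :: "'a measure"
    and Estar :: "nat \<Rightarrow> 'a \<Rightarrow> real"
    and E :: "nat \<Rightarrow> 'a \<Rightarrow> real"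
    and nstar :: "nat \<Rightarrow> nat"
    and \<mu> :: real
  assumes "prob_space M"
    and "\<And>i. Estar i \<in> borel_measurable M"
    and "\<And>j. E j \<in> borel_measurable M"
    and mu_pos: "0 < \<mu>"
    and Y_lim: "AE \<omega> in M. (\<lambda>m. Ysum (\<lambda>j. E j \<omega>) m / real m) \<longlonglongrightarrow> \<mu>"
  shows
    "(\<forall>\<mu>s::real. 0 < \<mu>s
        \<and> (AE \<omega> in M. (\<lambda>m. Xsum (\<lambda>i. Estar i \<omega>) (nstar m) / real (nstar m)) \<longlonglongrightarrow> \<mu>s)
        \<and> (\<lambda>m::nat. \<mu>s / \<mu>) \<in> O(\<lambda>m. 1)
      \<longrightarrow>
        (AE \<omega> in M. (\<lambda>m. primary_mass (\<lambda>i. Estar i \<omega>) (\<lambda>j. E j \<omega>) (nstar m) m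
              - real (nstar m) * \<mu>s / (real (nstar m) * \<mu>s + real m * \<mu>)) \<longlonglongrightarrow> 0)
      \<and> (filterlim (\<lambda>m. real m / real (nstar m)) at_top sequentially \<longrightarrow>
           (AE \<omega> in M. (\<lambda>m. primary_mass (\<lambda>i. Estar i \<omega>) (\<lambda>j. E j \<omega>) (nstar m) m) \<longlonglongrightarrow> 0)
         \<and> (AE \<omega> in M. (\<lambda>m. primary_mass (\<lambda>i. Estar i \<omega>) (\<lambda>j. E j \<omega>) (nstar m) m)
                \<in> O(\<lambda>m. real (nstar m) / real m))))
   \<and> (\<forall>N::nat. (\<forall>m. nstar m = N) \<longrightarrow>
        (AE \<omega> in M. (\<lambda>m. primary_mass (\<lambda>i. Estar i \<omega>) (\<lambda>j. E j \<omega>) N m) \<longlonglongrightarrow> 0)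
      \<and> (AE \<omega> in M. (\<lambda>m. primary_mass (\<lambda>i. Estar i \<omega>) (\<lambda>j. E j \<omega>) N m)
             \<in> O(\<lambda>m. 1 / real m)))"
proof (intro conjI allI impI)
  fix \<mu>s :: real
  assume "0 < \<mu>s
        \<and> (AE \<omega> in M. (\<lambda>m. Xsum (\<lambda>i. Estar i \<omega>) (nstar m) / real (nstar m)) \<longlonglongrightarrow> \<mu>s)
        \<and> (\<lambda>m::nat. \<mu>s / \<mu>) \<in> O(\<lambda>m. 1)"
  then have mus_pos: "0 < \<mu>s"
    and X_lim: "AE \<omega> in M. (\<lambda>m. Xsum (\<lambda>i. Estar i \<omega>) (nstar m) / real (nstar m)) \<longlonglongrightarrow> \<mu>s"
    by auto
  show "AE \<omega> in M. (\<lambda>m. primary_mass (\<lambda>i. Estar i \<omega>) (\<lambda>j. E j \<omega>) (nstar m) m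
          - real (nstar m) * \<mu>s / (real (nstar m) * \<mu>s + real m * \<mu>)) \<longlonglongrightarrow> 0"
    using X_lim Y_lim
    by eventually_elim (unfold primary_mass_eq, rule relative_share_approx[OF _ _ mus_pos mu_pos])
  show "AE \<omega> in M. (\<lambda>m. primary_mass (\<lambda>i. Estar i \<omega>) (\<lambda>j. E j \<omega>) (nstar m) m)
          \<in> O(\<lambda>m. real (nstar m) / real m)"
    using Y_lim X_lim
    by eventually_elim (rule primary_mass_bigo_primary_ratio[OF _ mu_pos])
  assume "filterlim (\<lambda>m. real m / real (nstar m)) at_top sequentially"
  then have "(\<lambda>m. inverse (real m / real (nstar m))) \<longlonglongrightarrow> 0"
    by (rule tendsto_inverse_0_at_top)
  then have ratio_lim: "(\<lambda>m. real (nstar m) / real m) \<longlonglongrightarrow> 0"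
    by simp
  show "AE \<omega> in M. (\<lambda>m. primary_mass (\<lambda>i. Estar i \<omega>) (\<lambda>j. E j \<omega>) (nstar m) m) \<longlonglongrightarrow> 0"
    using Y_lim X_lim
    by eventually_elim (rule primary_mass_tendsto_0_primary_ratio[OF _ mu_pos _ ratio_lim])
next
  fix N :: nat
  show "AE \<omega> in M. (\<lambda>m. primary_mass (\<lambda>i. Estar i \<omega>) (\<lambda>j. E j \<omega>) N m) \<longlonglongrightarrow> 0"
    using Y_lim by eventually_elim (rule primary_mass_fixed_tendsto_0[OF _ mu_pos])
  show "AE \<omega> in M. (\<lambda>m. primary_mass (\<lambda>i. Estar i \<omega>) (\<lambda>j. E j \<omega>) N m) \<in> O(\<lambda>m. 1 / real m)"
    using Y_lim by eventually_elim (rule primary_mass_fixed_bigo[OF _ mu_pos])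
qed

end
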